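(* Let $G$ be a plane DAG and let $P$ be a subhamiltonian path for $G$. Suppose $G$ has an internal face $f$ whose boundary consists of two directed paths from $v_s$ to $v_t$, namely $(v_s,w,v_t)$ and $(v_s,v_1,\dots,v_r,v_t)$ with $r\ge 1$ (so $f$ is non-transitive). Then the set of augmenting edges of $P$ drawn inside $f$ is exactly one of the following: (i) the single edge $wv_1$; (ii) the single edge $v_rw$; (iii) the two edges $v_iw$ and $wv_{i+1}$ for some $1\le i<r$.
   Context: A plane DAG is a DAG together with a fixed upward planar embedding (an equivalence class of upward planar drawings, i.e., planar drawings in which every edge is $y$-monotone increasing from tail to head, having the same rotation system, the same outer face, and the same left-to-right order of outgoing and of incoming edges at each vertex). An $st$-planar graph is a DAG with a single source $s$ and a single sink $t$ admitting a planar drawing with $s,t$ on the outer face. A subhamiltonian path for a plane DAG $G$ is a directed Hamiltonian path $P$ from $s$ to $t$ in some $st$-planar graph $\overline{G}$ that contains $G$ as a spanning subgraph, where $\overline{G}$ is equipped with an upward planar embedding (with $s,t$ on the outer face) whose restriction to $G$ coincides with the prescribed embedding of $G$. The edges of $P$ not belonging to $G$ are called augmenting edges; each of them lies inside some face of $G$. An internal face of a plane DAG whose boundary consists of two directed paths with common endpoints is an $st$-face; it is transitive if one of the two paths is a single edge and non-transitive otherwise. *)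

theory Defs
  imports "HOL-Analysis.Analysis"
begin

text \<open>Directed graphs are given by a finite vertex set V and an edge relation E (pairs (tail, head)).
  The plane is modelled by the complex numbers; the y-coordinate is Im.\<close>

definition is_dag :: "'v set \<Rightarrow> ('v \<times> 'v) set \<Rightarrow> bool" where
  "is_dag V E \<longleftrightarrow> finite V \<and> E \<subseteq> V \<times> V \<and> (\<forall>x. (x, x) \<notin> E\<^sup>+)"

definition upward_planar_drawing ::
  "'v set \<Rightarrow> ('v \<times> 'v) set \<Rightarrow> ('v \<Rightarrow> complex) \<Rightarrow> ('v \<times> 'v \<Rightarrow> real \<Rightarrow> complex) \<Rightarrow> bool" where
  "upward_planar_drawing V E pos crv \<longleftrightarrow>
     inj_on pos V \<and>
     (\<forall>e\<in>E. path (crv e) \<and> pathstart (crv e) = pos (fst e) \<and> pathfinish (crv e) = pos (snd e) \<and>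
        (\<forall>a b. 0 \<le> a \<longrightarrow> a < b \<longrightarrow> b \<le> 1 \<longrightarrow> Im (crv e a) < Im (crv e b))) \<and>
     (\<forall>e\<in>E. \<forall>e'\<in>E. e \<noteq> e' \<longrightarrow>
        path_image (crv e) \<inter> path_image (crv e') \<subseteq> pos ` ({fst e, snd e} \<inter> {fst e', snd e'})) \<and>
     (\<forall>e\<in>E. \<forall>x\<in>V. pos x \<in> path_image (crv e) \<longrightarrow> x = fst e \<or> x = snd e)"

definition drawing_image ::
  "'v set \<Rightarrow> ('v \<times> 'v) set \<Rightarrow> ('v \<Rightarrow> complex) \<Rightarrow> ('v \<times> 'v \<Rightarrow> real \<Rightarrow> complex) \<Rightarrow> complex set" where
  "drawing_image V E pos crv = pos ` V \<union> (\<Union>e\<in>E. path_image (crv e))"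

definition faces ::
  "'v set \<Rightarrow> ('v \<times> 'v) set \<Rightarrow> ('v \<Rightarrow> complex) \<Rightarrow> ('v \<times> 'v \<Rightarrow> real \<Rightarrow> complex) \<Rightarrow> complex set set" where
  "faces V E pos crv = components (- drawing_image V E pos crv)"

definition internal_face ::
  "'v set \<Rightarrow> ('v \<times> 'v) set \<Rightarrow> ('v \<Rightarrow> complex) \<Rightarrow> ('v \<times> 'v \<Rightarrow> real \<Rightarrow> complex) \<Rightarrow> complex set \<Rightarrow> bool" where
  "internal_face V E pos crv F \<longleftrightarrow> F \<in> faces V E pos crv \<and> bounded F"

definition outer_face ::
  "'v set \<Rightarrow> ('v \<times> 'v) set \<Rightarrow> ('v \<Rightarrow> complex) \<Rightarrow> ('v \<times> 'v \<Rightarrow> real \<Rightarrow> complex) \<Rightarrow> complex set \<Rightarrow> bool" where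
  "outer_face V E pos crv F \<longleftrightarrow> F \<in> faces V E pos crv \<and> \<not> bounded F"

definition st_planar_drawing ::
  "'v set \<Rightarrow> ('v \<times> 'v) set \<Rightarrow> 'v \<Rightarrow> 'v \<Rightarrow> ('v \<Rightarrow> complex) \<Rightarrow> ('v \<times> 'v \<Rightarrow> real \<Rightarrow> complex) \<Rightarrow> bool" where
  "st_planar_drawing V E s t pos crv \<longleftrightarrow>
     is_dag V E \<and> s \<in> V \<and> t \<in> V \<and>
     (\<forall>x\<in>V. (\<not> (\<exists>u. (u, x) \<in> E)) \<longleftrightarrow> x = s) \<and>
     (\<forall>x\<in>V. (\<not> (\<exists>u. (x, u) \<in> E)) \<longleftrightarrow> x = t) \<and>
     upward_planar_drawing V E pos crv \<and>
     (\<exists>F. outer_face V E pos crv F \<and> pos s \<in> frontier F) \<and>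
     (\<exists>F. outer_face V E pos crv F \<and> pos t \<in> frontier F)"

definition path_edges :: "'v list \<Rightarrow> ('v \<times> 'v) set" where
  "path_edges P = set (zip P (tl P))"

definition is_ham_path :: "'v set \<Rightarrow> ('v \<times> 'v) set \<Rightarrow> 'v list \<Rightarrow> 'v \<Rightarrow> 'v \<Rightarrow> bool" where
  "is_ham_path V E P s t \<longleftrightarrow>
     P \<noteq> [] \<and> distinct P \<and> set P = V \<and> hd P = s \<and> last P = t \<and> path_edges P \<subseteq> E"

definition augmenting_edges_in ::
  "('v \<times> 'v) set \<Rightarrow> 'v list \<Rightarrow> ('v \<times> 'v \<Rightarrow> real \<Rightarrow> complex) \<Rightarrow> complex set \<Rightarrow> ('v \<times> 'v) set" where
  "augmenting_edges_in E P crv F = {e \<in> path_edges P. e \<notin> E \<and> crv e ` {0<..<1} \<subseteq> F}"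

end

theory Submission
  imports Defs
begin

(*
  Every edge of an upward drawing is y-monotone, so each of the two boundary paths
  vs w vt and vs v_1 ... v_r vt of f is the graph of a continuous function of the height over
  [Im vs, Im vt]. The two graphs meet only at their ends, and the bounded face f is exactly the
  open strip between them.

  Every edge of the acyclic graph Gbar points forward along the Hamiltonian path P, so along P
  the boundary vertices appear in the order vs, v_1, ..., v_r, vt with w inserted between some
  v_i and v_(i+1) (where v_0 = vs and v_(r+1) = vt). The piece of P from v_i to w meets the
  boundary only at its ends, hence runs through f from one graph to the other; since f contains
  no vertex, that piece is a single augmenting edge v_i w inside f, and likewise for w v_(i+1).
  Conversely, an augmenting edge inside f joins two boundary vertices that are consecutive on P,
  so it is v_i w or w v_(i+1); for i = 0 resp. i = r this would be the edge vs w resp. w vt of G.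
*)

section \<open>Regions between two graphs\<close>

lemma nat_seq_crossing:
  fixes f :: "nat \<Rightarrow> 'a::linorder"
  assumes "f 0 \<le> y" "y \<le> f n" "0 < n"
  shows "\<exists>i<n. f i \<le> y \<and> y \<le> f (Suc i)"
  using assms(2,3)
proof (induction n)
  case (Suc n)
  show ?case
  proof (cases "f n \<le> y")
    case True
    with Suc.prems show ?thesis by auto
  next
    case False
    with assms(1) have "0 < n" by (cases n) auto
    from False have "y \<le> f n" by simp
    then obtain i where "i < n" "f i \<le> y" "y \<le> f (Suc i)" using Suc.IH \<open>0 < n\<close> by blast
    then show ?thesis by (auto intro: less_SucI)
  qed
qed simp

lemma continuous_on_pos_inside:
  fixes \<phi> :: "real \<Rightarrow> real"
  assumes cont: "continuous_on {a..b} \<phi>" and nz: "\<forall>h\<in>{a<..<b}. \<phi> h \<noteq> 0"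
    and ends: "\<phi> a > 0 \<or> \<phi> b > 0" and h: "h \<in> {a<..<b}"
  shows "\<phi> h > 0"
proof (rule ccontr)
  assume "\<not> \<phi> h > 0"
  then have neg: "\<phi> h < 0" using nz h by force
  from ends show False
  proof
    assume "\<phi> a > 0"
    moreover have "continuous_on {a..h} \<phi>" using cont h by (auto elim: continuous_on_subset)
    ultimately obtain x where "a \<le> x" "x \<le> h" "\<phi> x = 0"
      using IVT2'[of \<phi> h 0 a] neg h by auto
    then show False using nz h \<open>\<phi> a > 0\<close> by (cases "x = a") auto
  next
    assume "\<phi> b > 0"
    moreover have "continuous_on {h..b} \<phi>" using cont h by (auto elim: continuous_on_subset)
    ultimately obtain x where "h \<le> x" "x \<le> b" "\<phi> x = 0"
      using IVT'[of \<phi> h 0 b] neg h by auto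
    then show False using nz h \<open>\<phi> b > 0\<close> by (cases "x = b") auto
  qed
qed

definition graph_over :: "real \<Rightarrow> real \<Rightarrow> (real \<Rightarrow> real) \<Rightarrow> complex set" where
  "graph_over a b x = {z. a \<le> Im z \<and> Im z \<le> b \<and> Re z = x (Im z)}"

(* The product condition says that Re z lies strictly between f and g, whichever is on the left. *)
definition strip_between :: "real \<Rightarrow> real \<Rightarrow> (real \<Rightarrow> real) \<Rightarrow> (real \<Rightarrow> real) \<Rightarrow> complex set" where
  "strip_between a b f g =
     {z. a < Im z \<and> Im z < b \<and> (Re z - f (Im z)) * (g (Im z) - Re z) > 0}"

lemma graph_in_strip_between:
  fixes x f g :: "real \<Rightarrow> real"
  assumes cont: "continuous_on {a..b} x" "continuous_on {a..b} f" "continuous_on {a..b} g"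
    and sep: "\<forall>h\<in>{a..b}. f h \<noteq> g h"
    and start: "x a = g a" and finish: "x b = f b"
    and avoid: "\<forall>h\<in>{a<..<b}. x h \<noteq> f h \<and> x h \<noteq> g h"
    and h: "h \<in> {a<..<b}"
  shows "(x h - f h) * (g h - x h) > 0"
proof -
  have ab: "a \<in> {a..b}" "b \<in> {a..b}" using h by auto
  have sq_pos: "(g h' - f h') * (g h' - f h') > 0" if "h' \<in> {a..b}" for h'
  proof -
    have "g h' - f h' \<noteq> 0" using bspec[OF sep that] by simp
    then show ?thesis using not_real_square_gt_zero by blast
  qed
  have nz1: "(x h' - f h') * (g h' - f h') \<noteq> 0"
    and nz2: "(g h' - x h') * (g h' - f h') \<noteq> 0" if "h' \<in> {a<..<b}" for h'
    using bspec[OF avoid that] bspec[OF sep, of h'] that by auto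
  have pos1: "(x h - f h) * (g h - f h) > 0"
  proof (rule continuous_on_pos_inside[where \<phi> = "\<lambda>h. (x h - f h) * (g h - f h)", OF _ _ _ h])
    show "continuous_on {a..b} (\<lambda>h. (x h - f h) * (g h - f h))"
      using cont by (intro continuous_intros)
    show "\<forall>h\<in>{a<..<b}. (x h - f h) * (g h - f h) \<noteq> 0" using nz1 by blast
    show "(x a - f a) * (g a - f a) > 0 \<or> (x b - f b) * (g b - f b) > 0"
      using start sq_pos[OF ab(1)] by simp
  qed
  have pos2: "(g h - x h) * (g h - f h) > 0"
  proof (rule continuous_on_pos_inside[where \<phi> = "\<lambda>h. (g h - x h) * (g h - f h)", OF _ _ _ h])
    show "continuous_on {a..b} (\<lambda>h. (g h - x h) * (g h - f h))"
      using cont by (intro continuous_intros)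
    show "\<forall>h\<in>{a<..<b}. (g h - x h) * (g h - f h) \<noteq> 0" using nz2 by blast
    show "(g a - x a) * (g a - f a) > 0 \<or> (g b - x b) * (g b - f b) > 0"
      using finish sq_pos[OF ab(2)] by simp
  qed
  have "((x h - f h) * (g h - x h)) * ((g h - f h) * (g h - f h))
      = ((x h - f h) * (g h - f h)) * ((g h - x h) * (g h - f h))"
    by (simp add: algebra_simps)
  also have "\<dots> > 0" using pos1 pos2 by simp
  finally have "0 < ((x h - f h) * (g h - x h)) * ((g h - f h) * (g h - f h))" .
  moreover have "0 < (g h - f h) * (g h - f h)" using sq_pos h by auto
  ultimately show ?thesis by (rule zero_less_mult_pos2)
qed

lemma graph_joining_graphs_in_strip:
  fixes x f g :: "real \<Rightarrow> real"
  assumes cont: "continuous_on {a..b} x" "continuous_on {a..b} f" "continuous_on {a..b} g"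
    and sep: "\<forall>h\<in>{a..b}. f h \<noteq> g h"
    and ends: "x a = g a \<and> x b = f b \<or> x a = f a \<and> x b = g b"
    and avoid: "\<forall>h\<in>{a<..<b}. x h \<noteq> f h \<and> x h \<noteq> g h"
    and h: "h \<in> {a<..<b}"
  shows "(x h - f h) * (g h - x h) > 0"
  using ends
proof
  assume "x a = g a \<and> x b = f b"
  then show ?thesis using graph_in_strip_between[OF cont sep _ _ avoid h] by auto
next
  assume "x a = f a \<and> x b = g b"
  moreover have "\<forall>h\<in>{a..b}. g h \<noteq> f h" "\<forall>h\<in>{a<..<b}. x h \<noteq> g h \<and> x h \<noteq> f h"
    using sep avoid by auto
  ultimately have "(x h - g h) * (f h - x h) > 0"
    using graph_in_strip_between[OF cont(1,3,2) _ _ _ _ h] by auto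
  then show ?thesis by (simp add: algebra_simps)
qed

lemma strip_between_eq_image:
  assumes "\<forall>h\<in>{a<..<b}. f h \<noteq> g h"
  shows "strip_between a b f g = (\<lambda>(h, s). Complex (f h + s * (g h - f h)) h) ` ({a<..<b} \<times> {0<..<1})"
    (is "_ = ?p ` _")
proof (intro equalityI subsetI)
  fix z assume z: "z \<in> strip_between a b f g"
  define h where "h = Im z"
  define s where "s = (Re z - f h) / (g h - f h)"
  have "(Re z - f h) * (g h - Re z) > 0" using z unfolding strip_between_def h_def by simp
  moreover have "(Re z - f h) * (g h - Re z) \<le> 0" if "g h = f h"
    using that by (cases "f h \<le> Re z") (auto simp: mult_le_0_iff)
  ultimately have ne: "g h - f h \<noteq> 0" by auto
  have "0 < s" "s < 1"
    using z ne unfolding strip_between_def s_def h_def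
    by (auto simp: zero_less_mult_iff divide_simps split: if_splits)
  moreover have "z = ?p (h, s)" using ne by (simp add: complex_eq_iff s_def h_def)
  ultimately show "z \<in> ?p ` ({a<..<b} \<times> {0<..<1})"
    using z unfolding strip_between_def h_def by force
next
  fix z assume "z \<in> ?p ` ({a<..<b} \<times> {0<..<1})"
  then obtain h s where hs: "a < h" "h < b" "0 < s" "s < 1" and z: "z = ?p (h, s)" by auto
  have "(Re z - f h) * (g h - Re z) = s * (1 - s) * (g h - f h)\<^sup>2"
    unfolding z by (simp add: power2_eq_square algebra_simps)
  also have "\<dots> > 0" using hs bspec[OF assms, of h] by (intro mult_pos_pos) auto
  finally show "z \<in> strip_between a b f g" using hs z unfolding strip_between_def by simp
qed

lemma connected_strip_between:
  assumes "continuous_on {a..b} f" "continuous_on {a..b} g" "\<forall>h\<in>{a<..<b}. f h \<noteq> g h"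
  shows "connected (strip_between a b f g)"
proof -
  let ?p = "\<lambda>(h, s). Complex (f h + s * (g h - f h)) h"
  have "continuous_on ({a<..<b} \<times> {0<..<1::real}) (\<lambda>p. f (fst p))"
    by (rule continuous_on_compose2[OF assms(1)]) (auto intro: continuous_intros)
  moreover have "continuous_on ({a<..<b} \<times> {0<..<1::real}) (\<lambda>p. g (fst p))"
    by (rule continuous_on_compose2[OF assms(2)]) (auto intro: continuous_intros)
  ultimately have cont: "continuous_on ({a<..<b} \<times> {0<..<1}) ?p"
    unfolding Complex_eq case_prod_beta
    by (intro continuous_on_add continuous_on_mult continuous_on_diff continuous_on_of_real
        continuous_on_fst continuous_on_snd continuous_on_const continuous_on_id)
  have conn: "connected ({a<..<b} \<times> {0<..<1::real})"
    by (intro connected_Times connected_Ioo)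
  show ?thesis
    unfolding strip_between_eq_image[OF assms(3)] by (rule connected_continuous_image[OF cont conn])
qed

lemma ray_meets_frontier:
  fixes F :: "complex set"
  assumes "bounded F" "z \<in> F" "d \<noteq> 0"
  obtains s where "s \<ge> 0" "z + of_real s * d \<in> frontier F"
proof -
  let ?K = "(\<lambda>s. z + of_real s * d) ` {0..}"
  have "connected ?K" by (intro connected_continuous_image continuous_intros) simp
  obtain R where R: "R > 0" "F \<subseteq> ball 0 R" using bounded_subset_ballD[OF assms(1)] by blast
  define s where "s = (R + norm z) / norm d"
  have "s \<ge> 0" using R by (simp add: s_def)
  then have "norm (of_real s * d) = s * norm d" by (simp add: norm_mult)
  also have "\<dots> = R + norm z" using assms(3) by (simp add: s_def)
  finally have "norm (of_real s * d) = R + norm z" .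
  then have "norm (z + of_real s * d) \<ge> R"
    by (metis add.commute add_diff_cancel_left' add_le_cancel_right norm_triangle_ineq4)
  then have "?K - F \<noteq> {}" using R s_def by (auto intro!: bexI[of _ s] simp: subset_iff)
  moreover have "?K \<inter> F \<noteq> {}" using assms(2) by (auto intro!: image_eqI[of _ _ 0])
  ultimately have "?K \<inter> frontier F \<noteq> {}" using \<open>connected ?K\<close> connected_Int_frontier by blast
  then show ?thesis using that by auto
qed

lemma escape_direction:
  assumes "z \<notin> strip_between a b f g" "z \<notin> graph_over a b f \<union> graph_over a b g"
  obtains d where "d \<noteq> 0" "\<forall>s\<ge>0. z + of_real s * d \<notin> graph_over a b f \<union> graph_over a b g"
proof -
  let ?C = "graph_over a b f \<union> graph_over a b g"
  consider "Im z \<le> a" | "Im z \<ge> b"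
    | "Re z > f (Im z)" "Re z > g (Im z)" | "Re z < f (Im z)" "Re z < g (Im z)"
  proof (cases "a < Im z \<and> Im z < b")
    case True
    with assms have "(Re z - f (Im z)) * (g (Im z) - Re z) < 0"
      unfolding strip_between_def graph_over_def by (auto simp: not_less order.order_iff_strict)
    then show ?thesis using that by (auto simp: mult_less_0_iff)
  qed (use that in linarith)
  then show ?thesis
  proof cases
    case 1
    have "z + of_real s * (- \<i>) \<notin> ?C" if "s \<ge> 0" for s
      using assms(2) 1 that by (cases "s = 0") (auto simp: graph_over_def)
    then show ?thesis using that[of "- \<i>"] by auto
  next
    case 2
    have "z + of_real s * \<i> \<notin> ?C" if "s \<ge> 0" for s
      using assms(2) 2 that by (cases "s = 0") (auto simp: graph_over_def)
    then show ?thesis using that[of \<i>] by auto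
  next
    case 3
    have "z + of_real s * 1 \<notin> ?C" if "s \<ge> 0" for s
      using 3 that by (auto simp: graph_over_def)
    then show ?thesis using that[of 1] by auto
  next
    case 4
    have "z + of_real s * (- 1) \<notin> ?C" if "s \<ge> 0" for s
      using 4 that by (auto simp: graph_over_def)
    then show ?thesis using that[of "- 1"] by auto
  qed
qed

lemma bounded_region_eq_strip_between:
  fixes F :: "complex set"
  assumes cont: "continuous_on {a..b} f" "continuous_on {a..b} g"
    and sep: "\<forall>h\<in>{a<..<b}. f h \<noteq> g h"
    and F: "bounded F" "F \<noteq> {}" "F \<inter> (graph_over a b f \<union> graph_over a b g) = {}"
    and frontier: "frontier F \<subseteq> graph_over a b f \<union> graph_over a b g"
  shows "F = strip_between a b f g"
proof
  let ?C = "graph_over a b f \<union> graph_over a b g"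
  show F_sub: "F \<subseteq> strip_between a b f g"
  proof
    fix z assume z: "z \<in> F"
    show "z \<in> strip_between a b f g"
    proof (rule ccontr)
      assume "z \<notin> strip_between a b f g"
      moreover have "z \<notin> ?C" using z F(3) by auto
      ultimately obtain d where "d \<noteq> 0" "\<forall>s\<ge>0. z + of_real s * d \<notin> ?C"
        by (rule escape_direction)
      moreover obtain s where "s \<ge> 0" "z + of_real s * d \<in> frontier F"
        using ray_meets_frontier[OF F(1) z \<open>d \<noteq> 0\<close>] .
      ultimately show False using frontier by auto
    qed
  qed
  have "strip_between a b f g \<inter> ?C = {}"
    by (auto simp: strip_between_def graph_over_def)
  then have "strip_between a b f g \<inter> frontier F = {}" using frontier by auto
  moreover have "strip_between a b f g \<inter> F \<noteq> {}" using F_sub F(2) by auto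
  ultimately show "strip_between a b f g \<subseteq> F"
    using connected_Int_frontier[OF connected_strip_between[OF cont sep]] by blast
qed

section \<open>Upward drawings\<close>

definition edge_chain :: "('v \<times> 'v) set \<Rightarrow> (nat \<Rightarrow> 'v) \<Rightarrow> nat \<Rightarrow> bool" where
  "edge_chain E c m \<longleftrightarrow> (\<forall>j<m. (c j, c (Suc j)) \<in> E)"

locale upward_drawing =
  fixes V :: "'v set" and E :: "('v \<times> 'v) set" and pos :: "'v \<Rightarrow> complex"
    and crv :: "'v \<times> 'v \<Rightarrow> real \<Rightarrow> complex"
  assumes upward_planar: "upward_planar_drawing V E pos crv"
begin

lemma edge_path: "e \<in> E \<Longrightarrow> path (crv e)"
  and edge_start: "e \<in> E \<Longrightarrow> crv e 0 = pos (fst e)"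
  and edge_finish: "e \<in> E \<Longrightarrow> crv e 1 = pos (snd e)"
  and edge_Im_strict_mono: "e \<in> E \<Longrightarrow> strict_mono_on {0..1} (\<lambda>t. Im (crv e t))"
  using upward_planar
  unfolding upward_planar_drawing_def pathstart_def pathfinish_def strict_mono_on_def by auto

lemma edges_meet_at_common_ends:
  "e \<in> E \<Longrightarrow> e' \<in> E \<Longrightarrow> e \<noteq> e' \<Longrightarrow>
   path_image (crv e) \<inter> path_image (crv e') \<subseteq> pos ` ({fst e, snd e} \<inter> {fst e', snd e'})"
  using upward_planar unfolding upward_planar_drawing_def by auto

lemma vertex_on_edge_is_end: "e \<in> E \<Longrightarrow> x \<in> V \<Longrightarrow> pos x \<in> path_image (crv e) \<Longrightarrow> x = fst e \<or> x = snd e"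
  using upward_planar unfolding upward_planar_drawing_def by auto

lemma edge_Im_less_iff:
  "e \<in> E \<Longrightarrow> t \<in> {0..1} \<Longrightarrow> t' \<in> {0..1} \<Longrightarrow> Im (crv e t) < Im (crv e t') \<longleftrightarrow> t < t'"
  using strict_mono_on_less[OF edge_Im_strict_mono] by blast

lemma edge_Im_le_iff:
  "e \<in> E \<Longrightarrow> t \<in> {0..1} \<Longrightarrow> t' \<in> {0..1} \<Longrightarrow> Im (crv e t) \<le> Im (crv e t') \<longleftrightarrow> t \<le> t'"
  using strict_mono_on_less_eq[OF edge_Im_strict_mono] by blast

lemma Im_pos_less: "e \<in> E \<Longrightarrow> Im (pos (fst e)) < Im (pos (snd e))"
  using edge_Im_less_iff[of e 0 1] edge_start edge_finish by simp

lemma edge_point_Im_bounds: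
  assumes "e \<in> E" "t \<in> {0..1}"
  shows "Im (pos (fst e)) \<le> Im (crv e t)" "Im (crv e t) \<le> Im (pos (snd e))"
  using assms edge_Im_le_iff[of e 0 t] edge_Im_le_iff[of e t 1] edge_start edge_finish by auto

definition chain_image :: "(nat \<Rightarrow> 'v) \<Rightarrow> nat \<Rightarrow> complex set" where
  "chain_image c m = (\<Union>j<m. path_image (crv (c j, c (Suc j))))"

context
  fixes c :: "nat \<Rightarrow> 'v" and m :: nat
  assumes chain: "edge_chain E c m"
begin

lemma chain_edge: "j < m \<Longrightarrow> (c j, c (Suc j)) \<in> E"
  using chain unfolding edge_chain_def by blast

lemma chain_Im_less: "j < k \<Longrightarrow> k \<le> m \<Longrightarrow> Im (pos (c j)) < Im (pos (c k))"
  by (rule lift_Suc_mono_less_ivl[where N = "{..<m}"]) (use Im_pos_less chain_edge in auto)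

lemma chain_Im_le: "j \<le> k \<Longrightarrow> k \<le> m \<Longrightarrow> Im (pos (c j)) \<le> Im (pos (c k))"
  using chain_Im_less by (cases "j = k") (auto intro: less_imp_le)

lemma chain_image_iff:
  "q \<in> chain_image c m \<longleftrightarrow> (\<exists>j<m. \<exists>t\<in>{0..1}. q = crv (c j, c (Suc j)) t)"
  unfolding chain_image_def path_image_def by blast

lemma chain_point_Im_bounds:
  assumes "j < m" "t \<in> {0..1}"
  shows "Im (pos (c j)) \<le> Im (crv (c j, c (Suc j)) t)" "Im (crv (c j, c (Suc j)) t) \<le> Im (pos (c (Suc j)))"
  using edge_point_Im_bounds[OF chain_edge[OF assms(1)] assms(2)] by simp_all

lemma chain_image_Im_bounds:
  assumes "q \<in> chain_image c m"
  shows "Im (pos (c 0)) \<le> Im q" "Im q \<le> Im (pos (c m))"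
proof -
  obtain j t where j: "j < m" "t \<in> {0..1}" "q = crv (c j, c (Suc j)) t"
    using assms chain_image_iff by blast
  show "Im (pos (c 0)) \<le> Im q"
    using chain_point_Im_bounds(1)[OF j(1,2)] chain_Im_le[of 0 j] j by auto
  show "Im q \<le> Im (pos (c m))"
    using chain_point_Im_bounds(2)[OF j(1,2)] chain_Im_le[of "Suc j" m] j by auto
qed

lemma chain_points_of_equal_height:
  assumes p: "j < m" "t \<in> {0..1}" "p = crv (c j, c (Suc j)) t"
    and q: "k < m" "t' \<in> {0..1}" "q = crv (c k, c (Suc k)) t'"
    and "Im p = Im q" "j \<le> k"
  shows "p = q"
proof (cases "j = k")
  case True
  then show ?thesis
    using assms strict_mono_on_eqD[OF edge_Im_strict_mono[OF chain_edge[OF p(1)]]] by metis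
next
  case False
  have "Im p \<le> Im (pos (c (Suc j)))" "Im (pos (c k)) \<le> Im q"
    using chain_point_Im_bounds p q by auto
  moreover have "Im (pos (c (Suc j))) \<le> Im (pos (c k))" "Im (pos (c (Suc j))) < Im (pos (c k)) \<or> Suc j = k"
    using chain_Im_less[of "Suc j" k] chain_Im_le[of "Suc j" k] False \<open>j \<le> k\<close> q(1) by auto
  ultimately have jk: "Suc j = k" and Imp: "Im p = Im (pos (c k))" and Imq: "Im q = Im (pos (c k))"
    using \<open>Im p = Im q\<close> by auto
  have "t = 1"
    using Imp p jk edge_Im_le_iff[OF chain_edge[OF p(1)], of 1 t] edge_finish[OF chain_edge[OF p(1)]]
    by auto
  moreover have "t' = 0"
    using Imq q edge_Im_le_iff[OF chain_edge[OF q(1)], of t' 0] edge_start[OF chain_edge[OF q(1)]]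
    by auto
  ultimately show ?thesis
    using p q jk edge_finish[OF chain_edge[OF p(1)]] edge_start[OF chain_edge[OF q(1)]] by simp
qed

lemma inj_on_Im_chain_image: "inj_on Im (chain_image c m)"
proof (rule inj_onI)
  fix p q assume "p \<in> chain_image c m" "q \<in> chain_image c m" "Im p = Im q"
  then obtain j t k t' where
    p: "j < m" "t \<in> {0..1}" "p = crv (c j, c (Suc j)) t" and
    q: "k < m" "t' \<in> {0..1}" "q = crv (c k, c (Suc k)) t'"
    unfolding chain_image_iff by blast
  show "p = q"
  proof (cases "j \<le> k")
    case True
    show ?thesis by (rule chain_points_of_equal_height[OF p q \<open>Im p = Im q\<close> True])
  next
    case False
    show ?thesis
      by (rule chain_points_of_equal_height[OF q p \<open>Im p = Im q\<close>[symmetric], symmetric]) (use False in simp)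
  qed
qed

lemma compact_chain_image: "compact (chain_image c m)"
  unfolding chain_image_def by (auto intro!: compact_UN compact_path_image edge_path chain_edge)

lemma chain_vertex_in_image:
  assumes "j \<le> m" "0 < m"
  shows "pos (c j) \<in> chain_image c m"
proof (cases "j < m")
  case True
  have "pos (c j) = crv (c j, c (Suc j)) 0" using edge_start[OF chain_edge[OF True]] by simp
  then show ?thesis
    unfolding chain_image_iff using True by (intro exI[of _ j] conjI bexI[of _ 0]) auto
next
  case False
  then obtain k where k: "j = Suc k" "k < m" using assms by (cases j) auto
  then have "pos (c j) = crv (c k, c (Suc k)) 1" using edge_finish[OF chain_edge[OF k(2)]] by simp
  then show ?thesis
    unfolding chain_image_iff using k by (intro exI[of _ k] conjI bexI[of _ 1]) auto
qed

lemma Im_chain_image: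
  assumes "0 < m"
  shows "Im ` chain_image c m = {Im (pos (c 0))..Im (pos (c m))}"
proof
  show "Im ` chain_image c m \<subseteq> {Im (pos (c 0))..Im (pos (c m))}"
    using chain_image_Im_bounds by auto
next
  show "{Im (pos (c 0))..Im (pos (c m))} \<subseteq> Im ` chain_image c m"
  proof
    fix y assume "y \<in> {Im (pos (c 0))..Im (pos (c m))}"
    then obtain j where j: "j < m" "Im (pos (c j)) \<le> y" "y \<le> Im (pos (c (Suc j)))"
      using nat_seq_crossing[of "\<lambda>j. Im (pos (c j))" y m] assms by auto
    let ?g = "crv (c j, c (Suc j))"
    have "connected (Im ` path_image ?g)"
      by (intro connected_continuous_image connected_path_image continuous_intros edge_path chain_edge j(1))
    moreover have "pos (c j) \<in> path_image ?g" "pos (c (Suc j)) \<in> path_image ?g"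
      using pathstart_in_path_image[of ?g] pathfinish_in_path_image[of ?g]
        edge_start[OF chain_edge[OF j(1)]] edge_finish[OF chain_edge[OF j(1)]]
      unfolding pathstart_def pathfinish_def by simp_all
    ultimately have "{Im (pos (c j))..Im (pos (c (Suc j)))} \<subseteq> Im ` path_image ?g"
      by (intro connected_contains_Icc imageI)
    then have "y \<in> Im ` path_image ?g" using j(2,3) by auto
    then show "y \<in> Im ` chain_image c m"
      using j(1) unfolding chain_image_def by blast
  qed
qed

lemma chain_image_avoids_edges:
  assumes CE: "CE \<subseteq> E" "\<forall>j<m. (c j, c (Suc j)) \<notin> CE"
    and inner: "\<forall>j. 0 < j \<and> j < m \<longrightarrow> pos (c j) \<notin> (\<Union>e\<in>CE. path_image (crv e))"
    and q: "q \<in> chain_image c m" "Im (pos (c 0)) < Im q" "Im q < Im (pos (c m))"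
  shows "q \<notin> (\<Union>e\<in>CE. path_image (crv e))"
proof
  assume q_CE: "q \<in> (\<Union>e\<in>CE. path_image (crv e))"
  obtain j t where j: "j < m" "t \<in> {0..1}" "q = crv (c j, c (Suc j)) t"
    using q(1) chain_image_iff by blast
  have e: "(c j, c (Suc j)) \<in> E" using chain_edge[OF j(1)] .
  consider "t = 0" | "t = 1" | "0 < t" "t < 1" using j(2) by fastforce
  then show False
  proof cases
    case 1
    then have qj: "q = pos (c j)" using j edge_start[OF e] by simp
    have "j \<noteq> 0" using q(2) qj by (cases j) auto
    then show False using inner j(1) q_CE qj by simp
  next
    case 2
    then have qj: "q = pos (c (Suc j))" using j edge_finish[OF e] by simp
    have "Suc j \<noteq> m" using q(3) qj by auto
    then show False using inner j(1) q_CE qj by simp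
  next
    case 3
    obtain e' where e': "e' \<in> CE" "q \<in> path_image (crv e')" using q_CE by blast
    have ne: "(c j, c (Suc j)) \<noteq> e'" using CE(2) j(1) e'(1) by auto
    have q_on: "q \<in> path_image (crv (c j, c (Suc j)))"
      using j unfolding path_image_def by blast
    have "e' \<in> E" using CE(1) e'(1) by blast
    then have "q \<in> pos ` ({c j, c (Suc j)} \<inter> {fst e', snd e'})"
      using subsetD[OF edges_meet_at_common_ends[OF e _ ne], of q] q_on e'(2) by simp
    then have "q = crv (c j, c (Suc j)) 0 \<or> q = crv (c j, c (Suc j)) 1"
      using edge_start[OF e] edge_finish[OF e] by auto
    moreover have "Im (crv (c j, c (Suc j)) 0) < Im q" "Im q < Im (crv (c j, c (Suc j)) 1)"
      using 3 j edge_Im_less_iff[OF e] by auto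
    ultimately show False by auto
  qed
qed

definition chain_abscissa :: "real \<Rightarrow> real" where
  "chain_abscissa h = Re (the_inv_into (chain_image c m) Im h)"

lemma continuous_on_chain_abscissa:
  assumes "0 < m"
  shows "continuous_on {Im (pos (c 0))..Im (pos (c m))} chain_abscissa"
proof -
  have "continuous_on (Im ` chain_image c m) (the_inv_into (chain_image c m) Im)"
    by (intro continuous_on_inv continuous_intros compact_chain_image ballI
        the_inv_into_f_f inj_on_Im_chain_image)
  then show ?thesis
    unfolding chain_abscissa_def Im_chain_image[OF assms] by (intro continuous_intros)
qed

lemma chain_image_eq_graph:
  assumes "0 < m"
  shows "chain_image c m = graph_over (Im (pos (c 0))) (Im (pos (c m))) chain_abscissa"
proof (intro equalityI subsetI)
  fix q assume q: "q \<in> chain_image c m"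
  then show "q \<in> graph_over (Im (pos (c 0))) (Im (pos (c m))) chain_abscissa"
    using chain_image_Im_bounds the_inv_into_f_f[OF inj_on_Im_chain_image q]
    unfolding graph_over_def chain_abscissa_def by auto
next
  fix q assume "q \<in> graph_over (Im (pos (c 0))) (Im (pos (c m))) chain_abscissa"
  then have q: "Im q \<in> Im ` chain_image c m" "Re q = chain_abscissa (Im q)"
    unfolding graph_over_def Im_chain_image[OF assms] by auto
  then obtain p where p: "p \<in> chain_image c m" "Im p = Im q" by auto
  then have "Re p = Re q"
    using q(2) the_inv_into_f_f[OF inj_on_Im_chain_image p(1)] unfolding chain_abscissa_def by auto
  then show "q \<in> chain_image c m" using p by (metis complex_eq_iff)
qed

end

end

section \<open>Positions along a Hamiltonian path\<close>

definition path_position :: "'a list \<Rightarrow> 'a \<Rightarrow> nat" where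
  "path_position P x = (THE n. n < length P \<and> P ! n = x)"

lemma path_position:
  assumes "distinct P" "x \<in> set P"
  shows "path_position P x < length P" "P ! path_position P x = x"
proof -
  have "\<exists>!n. n < length P \<and> P ! n = x" using distinct_Ex1[OF assms] .
  then have "path_position P x < length P \<and> P ! path_position P x = x"
    unfolding path_position_def by (rule theI')
  then show "path_position P x < length P" "P ! path_position P x = x" by auto
qed

lemma path_position_nth: "distinct P \<Longrightarrow> n < length P \<Longrightarrow> path_position P (P ! n) = n"
  unfolding path_position_def by (auto intro!: the_equality simp: nth_eq_iff_index_eq)

lemma path_position_inj:
  assumes "distinct P" "x \<in> set P" "y \<in> set P" "path_position P x = path_position P y"
  shows "x = y"
  by (metis path_position(2)[OF assms(1,2)] path_position(2)[OF assms(1,3)] assms(4))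

lemma path_edges_iff: "e \<in> path_edges P \<longleftrightarrow> (\<exists>n. Suc n < length P \<and> e = (P ! n, P ! Suc n))"
proof
  assume "e \<in> path_edges P"
  then obtain n where "n < length P - 1" "e = (P ! n, tl P ! n)"
    unfolding path_edges_def set_zip by auto
  then show "\<exists>n. Suc n < length P \<and> e = (P ! n, P ! Suc n)"
    by (intro exI[of _ n]) (auto simp: nth_tl)
next
  assume "\<exists>n. Suc n < length P \<and> e = (P ! n, P ! Suc n)"
  then obtain n where "Suc n < length P" "e = (P ! n, P ! Suc n)" by blast
  then show "e \<in> path_edges P"
    unfolding path_edges_def set_zip by (auto simp: nth_tl intro!: exI[of _ n])
qed

context
  fixes V :: "'v set" and E :: "('v \<times> 'v) set" and P :: "'v list" and s t :: 'v
  assumes ham: "is_ham_path V E P s t"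
begin

lemma ham_path_distinct: "distinct P" and ham_path_set: "set P = V"
  and ham_path_edges: "path_edges P \<subseteq> E"
  using ham unfolding is_ham_path_def by auto

lemma ham_path_step: "Suc n < length P \<Longrightarrow> (P ! n, P ! Suc n) \<in> E"
  using ham_path_edges path_edges_iff by blast

lemma ham_path_segment_chain: "p + m < length P \<Longrightarrow> edge_chain E (\<lambda>j. P ! (p + j)) m"
  unfolding edge_chain_def by (auto intro!: ham_path_step)

lemma ham_path_trancl: "i < j \<Longrightarrow> j < length P \<Longrightarrow> (P ! i, P ! j) \<in> E\<^sup>+"
proof (induction i j rule: less_Suc_induct)
  case (1 i)
  then show ?case using ham_path_step by auto
next
  case (2 i j k)
  then have "(P ! i, P ! j) \<in> E\<^sup>+" "(P ! j, P ! k) \<in> E\<^sup>+" by simp_all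
  then show ?case by (rule trancl_trans)
qed

lemma ham_path_edge_forward:
  assumes dag: "is_dag V E" and xy: "(x, y) \<in> E"
  shows "path_position P x < path_position P y"
proof (rule ccontr)
  define i j where "i = path_position P x" and "j = path_position P y"
  assume "\<not> path_position P x < path_position P y"
  then have "j \<le> i" unfolding i_def j_def by simp
  have "x \<in> set P" "y \<in> set P" using xy dag ham_path_set unfolding is_dag_def by auto
  then have i: "i < length P" "P ! i = x" and j: "j < length P" "P ! j = y"
    unfolding i_def j_def
    using path_position[OF ham_path_distinct \<open>x \<in> set P\<close>] path_position[OF ham_path_distinct \<open>y \<in> set P\<close>]
    by simp_all
  have "(y, x) \<in> E\<^sup>*"
  proof (cases "j = i")
    case True
    then show ?thesis using i j by simp
  next
    case False
    then have "(P ! j, P ! i) \<in> E\<^sup>+" using ham_path_trancl \<open>j \<le> i\<close> i(1) by simp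
    then show ?thesis using i j by simp
  qed
  with xy have "(x, x) \<in> E\<^sup>+" by simp
  with dag show False unfolding is_dag_def by blast
qed

end

section \<open>A non-transitive face\<close>

locale nontransitive_face =
  fixes V :: "'v set" and E Eb :: "('v \<times> 'v) set"
    and pos :: "'v \<Rightarrow> complex" and crv :: "'v \<times> 'v \<Rightarrow> real \<Rightarrow> complex"
    and P :: "'v list" and s t vs w vt :: 'v and v :: "nat \<Rightarrow> 'v" and r :: nat
    and F :: "complex set"
  assumes spanning: "E \<subseteq> Eb"
    and Gbar: "st_planar_drawing V Eb s t pos crv"
    and ham: "is_ham_path V Eb P s t"
    and face: "internal_face V E pos crv F"
    and r_pos: "r \<ge> 1"
    and verts: "vs \<in> V" "w \<in> V" "vt \<in> V" "v ` {1..r} \<subseteq> V"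
    and dist: "w \<notin> v ` {1..r}" "vs \<noteq> w" "w \<noteq> vt"
    and edges: "(vs, w) \<in> E" "(w, vt) \<in> E" "(vs, v 1) \<in> E" "(v r, vt) \<in> E"
      "\<forall>i. 1 \<le> i \<and> i < r \<longrightarrow> (v i, v (Suc i)) \<in> E"
    and boundary: "frontier F =
      (\<Union>e \<in> {(vs, w), (w, vt), (vs, v 1), (v r, vt)} \<union> {(v i, v (Suc i)) | i. 1 \<le> i \<and> i < r}.
         path_image (crv e))"
begin

sublocale upward_drawing V Eb pos crv
  using Gbar unfolding st_planar_drawing_def by unfold_locales auto

lemma dag_Eb: "is_dag V Eb"
  using Gbar unfolding st_planar_drawing_def by auto

definition vpath :: "nat \<Rightarrow> 'v" where
  "vpath j = (if j = 0 then vs else if j = Suc r then vt else v j)"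

definition wpath :: "nat \<Rightarrow> 'v" where
  "wpath j = (if j = 0 then vs else if j = 1 then w else vt)"

definition boundary_vertices :: "'v set" where
  "boundary_vertices = insert w (vpath ` {..Suc r})"

definition boundary_edges :: "('v \<times> 'v) set" where
  "boundary_edges = {(vs, w), (w, vt)} \<union> (\<lambda>j. (vpath j, vpath (Suc j))) ` {..r}"

lemma vpath_simps: "vpath 0 = vs" "vpath (Suc r) = vt" "1 \<le> j \<Longrightarrow> j \<le> r \<Longrightarrow> vpath j = v j"
  unfolding vpath_def by auto

lemma wpath_simps: "wpath 0 = vs" "wpath 1 = w" "wpath 2 = vt"
  unfolding wpath_def by auto

lemma vpath_edge: "j \<le> r \<Longrightarrow> (vpath j, vpath (Suc j)) \<in> E"
  using edges r_pos unfolding vpath_def by (cases "j = 0"; cases "j = r") auto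

lemma vpath_chain: "edge_chain Eb vpath (Suc r)"
  using vpath_edge spanning unfolding edge_chain_def by auto

lemma wpath_chain: "edge_chain Eb wpath 2"
  using edges(1,2) spanning unfolding edge_chain_def wpath_def by (auto simp: less_2_cases_iff)

lemma vpath_ne_w: "j \<le> Suc r \<Longrightarrow> vpath j \<noteq> w"
  using dist unfolding vpath_def by auto

lemma vpath_in_V: "j \<le> Suc r \<Longrightarrow> vpath j \<in> V"
  using verts unfolding vpath_def by auto

lemma boundary_edges_in_E: "boundary_edges \<subseteq> E"
  using edges(1,2) vpath_edge unfolding boundary_edges_def by auto

lemma boundary_edges_in_Eb: "boundary_edges \<subseteq> Eb"
  using boundary_edges_in_E spanning by blast

lemma vpath_boundary_vertex: "j \<le> Suc r \<Longrightarrow> vpath j \<in> boundary_vertices"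
  unfolding boundary_vertices_def by blast

lemma boundary_edge_ends: "e \<in> boundary_edges \<Longrightarrow> fst e \<in> boundary_vertices \<and> snd e \<in> boundary_vertices"
  using vpath_boundary_vertex[of 0] vpath_boundary_vertex[of "Suc r"] vpath_boundary_vertex
  unfolding boundary_edges_def vpath_simps by (auto simp: boundary_vertices_def)

lemma boundary_edges_eq:
  "{(vs, w), (w, vt), (vs, v 1), (v r, vt)} \<union> {(v i, v (Suc i)) | i. 1 \<le> i \<and> i < r} = boundary_edges"
proof -
  have split: "{..r} = insert 0 (insert r {1..<r})" using r_pos by auto
  have mid: "(\<lambda>j. (vpath j, vpath (Suc j))) ` {1..<r} = {(v i, v (Suc i)) | i. 1 \<le> i \<and> i < r}"
    by (auto simp: vpath_def)
  show ?thesis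
    unfolding boundary_edges_def split image_insert mid using r_pos by (auto simp: vpath_def)
qed

lemma frontier_face_boundary: "frontier F = (\<Union>e\<in>boundary_edges. path_image (crv e))"
  using boundary unfolding boundary_edges_eq .

lemma frontier_face_chains: "frontier F = chain_image wpath 2 \<union> chain_image vpath (Suc r)"
proof -
  have "chain_image wpath 2 = path_image (crv (vs, w)) \<union> path_image (crv (w, vt))"
    unfolding chain_image_def by (auto simp: wpath_def less_2_cases_iff)
  moreover have "chain_image vpath (Suc r) = (\<Union>j\<le>r. path_image (crv (vpath j, vpath (Suc j))))"
    unfolding chain_image_def lessThan_Suc_atMost ..
  ultimately show ?thesis unfolding frontier_face_boundary boundary_edges_def by auto
qed

lemma face_component: "F \<in> components (- drawing_image V E pos crv)" and bounded_face: "bounded F"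
  using face unfolding internal_face_def faces_def by auto

lemma face_nonempty: "F \<noteq> {}"
  using in_components_nonempty[OF face_component] .

lemma face_disjoint_drawing: "F \<inter> drawing_image V E pos crv = {}"
  using in_components_subset[OF face_component] by auto

lemma vertex_not_in_face: "x \<in> V \<Longrightarrow> pos x \<notin> F"
  using face_disjoint_drawing unfolding drawing_image_def by auto

lemma edge_not_in_face: "e \<in> E \<Longrightarrow> q \<in> path_image (crv e) \<Longrightarrow> q \<notin> F"
  using face_disjoint_drawing unfolding drawing_image_def by auto

lemma frontier_face_disjoint: "F \<inter> frontier F = {}"
  using edge_not_in_face boundary_edges_in_E unfolding frontier_face_boundary by blast

lemma boundary_vertex_if_on_frontier:
  assumes "x \<in> V" "pos x \<in> frontier F"
  shows "x \<in> boundary_vertices"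
proof -
  obtain e where e: "e \<in> boundary_edges" "pos x \<in> path_image (crv e)"
    using assms(2) unfolding frontier_face_boundary by blast
  have "e \<in> Eb" using e(1) boundary_edges_in_Eb by blast
  then have "x = fst e \<or> x = snd e" using vertex_on_edge_is_end assms(1) e(2) by blast
  then show ?thesis using boundary_edge_ends[OF e(1)] by auto
qed

lemma boundary_vertex_if_in_closure:
  assumes "x \<in> V" "pos x \<in> closure F"
  shows "x \<in> boundary_vertices"
proof (rule boundary_vertex_if_on_frontier[OF assms(1)])
  show "pos x \<in> frontier F"
    using assms vertex_not_in_face interior_subset[of F] unfolding frontier_def by blast
qed

definition xw :: "real \<Rightarrow> real" where "xw = chain_abscissa wpath 2"
definition xv :: "real \<Rightarrow> real" where "xv = chain_abscissa vpath (Suc r)"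

lemma wpath_graph: "chain_image wpath 2 = graph_over (Im (pos vs)) (Im (pos vt)) xw"
  using chain_image_eq_graph[OF wpath_chain] unfolding xw_def wpath_simps by simp

lemma vpath_graph: "chain_image vpath (Suc r) = graph_over (Im (pos vs)) (Im (pos vt)) xv"
  using chain_image_eq_graph[OF vpath_chain] unfolding xv_def vpath_simps by simp

lemma continuous_on_xw: "continuous_on {Im (pos vs)..Im (pos vt)} xw"
  using continuous_on_chain_abscissa[OF wpath_chain] unfolding xw_def wpath_simps by simp

lemma continuous_on_xv: "continuous_on {Im (pos vs)..Im (pos vt)} xv"
  using continuous_on_chain_abscissa[OF vpath_chain] unfolding xv_def vpath_simps by simp

lemma frontier_face_graphs:
  "frontier F = graph_over (Im (pos vs)) (Im (pos vt)) xw \<union> graph_over (Im (pos vs)) (Im (pos vt)) xv"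
  unfolding frontier_face_chains wpath_graph vpath_graph ..

lemma boundary_abscissae_differ:
  assumes h: "h \<in> {Im (pos vs)<..<Im (pos vt)}"
  shows "xw h \<noteq> xv h"
proof
  assume eq: "xw h = xv h"
  define q where "q = Complex (xw h) h"
  have "q \<in> chain_image wpath 2" "q \<in> chain_image vpath (Suc r)"
    using h eq unfolding wpath_graph vpath_graph graph_over_def q_def by auto
  then obtain j k where j: "j < 2" "q \<in> path_image (crv (wpath j, wpath (Suc j)))"
    and k: "k < Suc r" "q \<in> path_image (crv (vpath k, vpath (Suc k)))"
    unfolding chain_image_def by blast
  have ej: "(wpath j, wpath (Suc j)) \<in> Eb" using wpath_chain j(1) unfolding edge_chain_def by blast
  have ek: "(vpath k, vpath (Suc k)) \<in> Eb" using vpath_chain k(1) unfolding edge_chain_def by blast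
  have w_j: "w \<in> {wpath j, wpath (Suc j)}" using j(1) by (auto simp: wpath_def less_2_cases_iff)
  have w_k: "w \<notin> {vpath k, vpath (Suc k)}"
    using vpath_ne_w[of k] vpath_ne_w[of "Suc k"] k(1) by auto
  then have "(wpath j, wpath (Suc j)) \<noteq> (vpath k, vpath (Suc k))" using w_j by auto
  then have "q \<in> pos ` ({wpath j, wpath (Suc j)} \<inter> {vpath k, vpath (Suc k)})"
    using subsetD[OF edges_meet_at_common_ends[OF ej ek], of q] j(2) k(2) by simp
  then obtain x where x: "x \<in> {wpath j, wpath (Suc j)}" "x \<in> {vpath k, vpath (Suc k)}" "q = pos x"
    by (elim imageE IntE)
  with w_k have "x \<noteq> w" by auto
  with x(1) have "x = vs \<or> x = vt" using j(1) by (auto simp: wpath_def less_2_cases_iff)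
  moreover have "Im (pos x) = h" using x(3) unfolding q_def by (metis complex.sel(2))
  ultimately show False using h by auto
qed

lemma face_eq_strip: "F = strip_between (Im (pos vs)) (Im (pos vt)) xw xv"
proof (rule bounded_region_eq_strip_between[OF continuous_on_xw continuous_on_xv _ bounded_face face_nonempty])
  show "\<forall>h\<in>{Im (pos vs)<..<Im (pos vt)}. xw h \<noteq> xv h" using boundary_abscissae_differ by blast
  show "F \<inter> (graph_over (Im (pos vs)) (Im (pos vt)) xw \<union> graph_over (Im (pos vs)) (Im (pos vt)) xv) = {}"
    using frontier_face_disjoint unfolding frontier_face_graphs .
qed (simp add: frontier_face_graphs)

lemma w_height: "Im (pos vs) < Im (pos w)" "Im (pos w) < Im (pos vt)"
  using Im_pos_less[of "(vs, w)"] Im_pos_less[of "(w, vt)"] edges(1,2) spanning by auto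

lemma vpath_height:
  assumes "1 \<le> j" "j \<le> r"
  shows "Im (pos vs) < Im (pos (vpath j))" "Im (pos (vpath j)) < Im (pos vt)"
  using chain_Im_less[OF vpath_chain, of 0 j] chain_Im_less[OF vpath_chain, of j "Suc r"] assms
  unfolding vpath_simps by auto

lemma pos_w_on_wpath_graph: "Re (pos w) = xw (Im (pos w))"
  using chain_vertex_in_image[OF wpath_chain, of 1] unfolding wpath_graph graph_over_def wpath_simps
  by simp

lemma pos_vpath_on_vpath_graph: "j \<le> Suc r \<Longrightarrow> Re (pos (vpath j)) = xv (Im (pos (vpath j)))"
  using chain_vertex_in_image[OF vpath_chain, of j] unfolding vpath_graph graph_over_def by simp

lemma chain_crossing_face:
  assumes chain: "edge_chain Eb c m" "0 < m"
    and ends: "{c 0, c m} = {w, vpath j}" "1 \<le> j" "j \<le> r"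
    and avoid: "\<And>z. z \<in> chain_image c m \<Longrightarrow> Im (pos (c 0)) < Im z \<Longrightarrow> Im z < Im (pos (c m))
      \<Longrightarrow> z \<notin> frontier F"
    and z: "z \<in> chain_image c m" "Im (pos (c 0)) < Im z" "Im z < Im (pos (c m))"
  shows "z \<in> F"
proof -
  define a b x where "a = Im (pos (c 0))" and "b = Im (pos (c m))" and "x = chain_abscissa c m"
  have ends_cases: "c 0 = w \<and> c m = vpath j \<or> c 0 = vpath j \<and> c m = w"
    using ends vpath_ne_w[of j] by (auto simp: doubleton_eq_iff)
  have heights: "Im (pos vs) < a" "b < Im (pos vt)"
    using ends_cases w_height vpath_height[OF ends(2,3)] unfolding a_def b_def by auto
  have graph: "chain_image c m = graph_over a b x"
    unfolding a_def b_def x_def by (rule chain_image_eq_graph[OF chain])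
  have sub: "{a..b} \<subseteq> {Im (pos vs)..Im (pos vt)}" using heights by auto
  have cont: "continuous_on {a..b} x" "continuous_on {a..b} xw" "continuous_on {a..b} xv"
    using continuous_on_chain_abscissa[OF chain] continuous_on_subset[OF continuous_on_xw sub]
      continuous_on_subset[OF continuous_on_xv sub] unfolding a_def b_def x_def by auto
  have sep: "\<forall>h\<in>{a..b}. xw h \<noteq> xv h" using boundary_abscissae_differ heights by auto
  have avoid': "\<forall>h\<in>{a<..<b}. x h \<noteq> xw h \<and> x h \<noteq> xv h"
  proof
    fix h assume h: "h \<in> {a<..<b}"
    have "Complex (x h) h \<in> chain_image c m" using h unfolding graph graph_over_def by auto
    then have "Complex (x h) h \<notin> frontier F" using avoid h unfolding a_def b_def by auto
    then show "x h \<noteq> xw h \<and> x h \<noteq> xv h"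
      using h heights unfolding frontier_face_graphs graph_over_def by auto
  qed
  have on_graph: "Re (pos (c 0)) = x a" "Re (pos (c m)) = x b"
    using chain_vertex_in_image[OF chain(1), of 0] chain_vertex_in_image[OF chain(1), of m] chain(2)
    unfolding graph graph_over_def a_def b_def by auto
  have h: "Im z \<in> {a<..<b}" and xz: "x (Im z) = Re z" using z unfolding graph graph_over_def a_def b_def by auto
  have "x a = xv a \<and> x b = xw b \<or> x a = xw a \<and> x b = xv b"
    using ends_cases on_graph pos_w_on_wpath_graph pos_vpath_on_vpath_graph[of j] ends(3)
    unfolding a_def b_def by auto
  then have "(x (Im z) - xw (Im z)) * (xv (Im z) - x (Im z)) > 0"
    by (rule graph_joining_graphs_in_strip[OF cont sep _ avoid' h])
  then have "z \<in> strip_between (Im (pos vs)) (Im (pos vt)) xw xv"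
    using h heights xz unfolding strip_between_def by auto
  then show "z \<in> F" using face_eq_strip by simp
qed

lemma ham_segment_in_face:
  assumes pq: "p < q" "q < length P"
    and inner: "\<forall>n. p < n \<and> n < q \<longrightarrow> P ! n \<notin> boundary_vertices"
    and not_boundary_edge: "(P ! p, P ! q) \<notin> boundary_edges"
    and ends: "{P ! p, P ! q} = {w, vpath j}" "1 \<le> j" "j \<le> r"
    and z: "z \<in> chain_image (\<lambda>k. P ! (p + k)) (q - p)" "Im (pos (P ! p)) < Im z" "Im z < Im (pos (P ! q))"
  shows "z \<in> F"
proof -
  define m c where "m = q - p" and "c = (\<lambda>k. P ! (p + k))"
  have m: "0 < m" "c 0 = P ! p" "c m = P ! q" using pq unfolding m_def c_def by auto
  have chain: "edge_chain Eb c m"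
    unfolding c_def m_def by (rule ham_path_segment_chain[OF ham]) (use pq in auto)
  have c_V: "c k \<in> V" if "k \<le> m" for k
    using that pq ham_path_set[OF ham] unfolding c_def m_def by auto
  have inner_c: "c k \<notin> boundary_vertices" if "0 < k" "k < m" for k
    using inner that unfolding c_def m_def by auto
  have inner_pos: "\<forall>k. 0 < k \<and> k < m \<longrightarrow> pos (c k) \<notin> (\<Union>e\<in>boundary_edges. path_image (crv e))"
  proof (intro allI impI notI)
    fix k assume k: "0 < k \<and> k < m" and "pos (c k) \<in> (\<Union>e\<in>boundary_edges. path_image (crv e))"
    then have "c k \<in> boundary_vertices"
      using boundary_vertex_if_on_frontier[OF c_V[of k]] unfolding frontier_face_boundary by simp
    then show False using inner_c k by blast
  qed
  have chain_not_boundary: "\<forall>k<m. (c k, c (Suc k)) \<notin> boundary_edges"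
  proof (intro allI impI notI)
    fix k assume k: "k < m" and e: "(c k, c (Suc k)) \<in> boundary_edges"
    have bv: "c k \<in> boundary_vertices" "c (Suc k) \<in> boundary_vertices"
      using boundary_edge_ends[OF e] by simp_all
    have "k = 0" using inner_c[of k] k bv(1) by (metis neq0_conv)
    moreover have "Suc k = m" using inner_c[of "Suc k"] k bv(2) by (metis Suc_lessI zero_less_Suc)
    ultimately show False using e not_boundary_edge m by auto
  qed
  show ?thesis
  proof (rule chain_crossing_face[OF chain m(1) _ ends(2,3)])
    show "{c 0, c m} = {w, vpath j}" using ends(1) m by simp
    show "z' \<notin> frontier F"
      if "z' \<in> chain_image c m" "Im (pos (c 0)) < Im z'" "Im z' < Im (pos (c m))" for z'
      using chain_image_avoids_edges[OF chain boundary_edges_in_Eb chain_not_boundary inner_pos that]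
      unfolding frontier_face_boundary .
  qed (use z m in \<open>auto simp: m_def c_def\<close>)
qed

lemma ham_segment_across_face:
  assumes pq: "p < q" "q < length P"
    and inner: "\<forall>n. p < n \<and> n < q \<longrightarrow> P ! n \<notin> boundary_vertices"
    and not_boundary_edge: "(P ! p, P ! q) \<notin> boundary_edges"
    and ends: "{P ! p, P ! q} = {w, vpath j}" "1 \<le> j" "j \<le> r"
  shows "q = Suc p" "crv (P ! p, P ! q) ` {0<..<1} \<subseteq> F"
proof -
  let ?c = "\<lambda>k. P ! (p + k)"
  have chain: "edge_chain Eb ?c (q - p)" by (rule ham_path_segment_chain[OF ham]) (use pq in auto)
  note in_F = ham_segment_in_face[OF assms]
  show "q = Suc p"
  proof (rule ccontr)
    \<comment> \<open>otherwise the first inner vertex of the segment would be a vertex inside the face\<close>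
    assume "q \<noteq> Suc p"
    then have "1 < q - p" using pq by auto
    then have "pos (P ! Suc p) \<in> F"
      using in_F[OF chain_vertex_in_image[OF chain, of 1]] chain_Im_less[OF chain, of 0 1]
        chain_Im_less[OF chain, of 1 "q - p"] pq by auto
    moreover have "P ! Suc p \<in> V" using pq ham_path_set[OF ham] by auto
    ultimately show False using vertex_not_in_face by blast
  qed
  then have edge: "(P ! p, P ! q) \<in> Eb" using ham_path_step[OF ham] pq by auto
  show "crv (P ! p, P ! q) ` {0<..<1} \<subseteq> F"
  proof
    fix z assume "z \<in> crv (P ! p, P ! q) ` {0<..<1}"
    then obtain t where t: "t \<in> {0<..<1}" "z = crv (P ! p, P ! q) t" by auto
    have "z \<in> chain_image ?c (q - p)"
      using t \<open>q = Suc p\<close> unfolding chain_image_iff[OF chain] by auto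
    moreover have "Im (pos (P ! p)) < Im z" "Im z < Im (pos (P ! q))"
      using t edge_Im_less_iff[OF edge, of 0 t] edge_Im_less_iff[OF edge, of t 1]
        edge_start[OF edge] edge_finish[OF edge] by auto
    ultimately show "z \<in> F" by (rule in_F)
  qed
qed

abbreviation position :: "'v \<Rightarrow> nat" where
  "position \<equiv> path_position P"

lemma position_less_length: "x \<in> V \<Longrightarrow> position x < length P"
  and nth_position: "x \<in> V \<Longrightarrow> P ! position x = x"
  by (rule path_position[OF ham_path_distinct[OF ham]], simp add: ham_path_set[OF ham])+

lemma position_inj: "x \<in> V \<Longrightarrow> y \<in> V \<Longrightarrow> position x = position y \<Longrightarrow> x = y"
  by (rule path_position_inj[OF ham_path_distinct[OF ham]]) (simp_all add: ham_path_set[OF ham])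

lemma position_nth: "n < length P \<Longrightarrow> position (P ! n) = n"
  using path_position_nth[OF ham_path_distinct[OF ham]] .

lemma edge_position_less: "(x, y) \<in> E \<Longrightarrow> position x < position y"
  by (rule ham_path_edge_forward[OF ham dag_Eb]) (use spanning in blast)

lemma vpath_position_less: "j < l \<Longrightarrow> l \<le> Suc r \<Longrightarrow> position (vpath j) < position (vpath l)"
  by (rule lift_Suc_mono_less_ivl[where N = "{..r}"]) (use edge_position_less vpath_edge in auto)

lemma vpath_position_le: "j \<le> l \<Longrightarrow> l \<le> Suc r \<Longrightarrow> position (vpath j) \<le> position (vpath l)"
  using vpath_position_less by (cases "j = l") (auto intro: less_imp_le)

lemma w_position_gap: "\<exists>i\<le>r. position (vpath i) < position w \<and> position w < position (vpath (Suc i))"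
proof -
  have "position (vpath 0) \<le> position w" "position w \<le> position (vpath (Suc r))"
    using edge_position_less[OF edges(1)] edge_position_less[OF edges(2)] unfolding vpath_simps by auto
  then obtain i where i: "i < Suc r" "position (vpath i) \<le> position w" "position w \<le> position (vpath (Suc i))"
    using nat_seq_crossing[of "\<lambda>j. position (vpath j)" "position w" "Suc r"] by auto
  have ne: "position (vpath j) \<noteq> position w" if "j \<le> Suc r" for j
    using position_inj[OF vpath_in_V[OF that] verts(2)] vpath_ne_w[OF that] by blast
  have "position (vpath i) < position w" using i(2) ne[of i] i(1) by simp
  moreover have "position w < position (vpath (Suc i))" using i(3) ne[of "Suc i"] i(1) by simp
  ultimately show ?thesis using i(1) by (intro exI[of _ i]) simp
qed

lemma augmenting_if_inside:
  assumes "e \<in> path_edges P" "crv e ` {0<..<1} \<subseteq> F"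
  shows "e \<in> augmenting_edges_in E P crv F"
proof -
  have "crv e (1/2) \<in> F" using assms(2) by auto
  moreover have "crv e (1/2) \<in> path_image (crv e)" unfolding path_image_def by auto
  ultimately have "e \<notin> E" using edge_not_in_face by blast
  then show ?thesis using assms unfolding augmenting_edges_in_def by auto
qed

lemma augmenting_edge_ends:
  assumes "e \<in> augmenting_edges_in E P crv F"
  shows "fst e \<in> boundary_vertices" "snd e \<in> boundary_vertices"
proof -
  have e: "e \<in> Eb" "crv e ` {0<..<1} \<subseteq> F"
    using assms ham_path_edges[OF ham] unfolding augmenting_edges_in_def by auto
  have "crv e ` closure {0<..<1::real} \<subseteq> closure F"
  proof (rule image_closure_subset)
    show "continuous_on (closure {0<..<1::real}) (crv e)"
      using edge_path[OF e(1)] unfolding path_def by simp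
    show "crv e ` {0<..<1} \<subseteq> closure F" using e(2) closure_subset by blast
  qed simp
  then have "crv e 0 \<in> closure F" "crv e 1 \<in> closure F" by auto
  then have "pos (fst e) \<in> closure F" "pos (snd e) \<in> closure F"
    using edge_start[OF e(1)] edge_finish[OF e(1)] by simp_all
  moreover have "fst e \<in> V" "snd e \<in> V" using e(1) dag_Eb unfolding is_dag_def by auto
  ultimately show "fst e \<in> boundary_vertices" "snd e \<in> boundary_vertices"
    using boundary_vertex_if_in_closure by auto
qed

context
  fixes i :: nat
  assumes gap: "i \<le> r" "position (vpath i) < position w" "position w < position (vpath (Suc i))"
begin

lemma boundary_vertex_position:
  assumes "x \<in> boundary_vertices"
  shows "position x \<le> position (vpath i) \<or> x = w \<or> position (vpath (Suc i)) \<le> position x"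
proof -
  from assms consider "x = w" | j where "j \<le> Suc r" "x = vpath j"
    unfolding boundary_vertices_def by auto
  then show ?thesis
  proof cases
    case (2 j)
    then show ?thesis using vpath_position_le[of j i] vpath_position_le[of "Suc i" j] gap(1)
      by (cases "j \<le> i") auto
  qed simp
qed

lemma no_boundary_vertex_in_gap:
  assumes "position (vpath i) < n" "n < position (vpath (Suc i))" "n \<noteq> position w"
  shows "P ! n \<notin> boundary_vertices"
proof
  assume fv: "P ! n \<in> boundary_vertices"
  have n: "n < length P" using assms(2) position_less_length vpath_in_V gap(1) by (meson Suc_le_mono order.strict_trans)
  then have pn: "position (P ! n) = n" by (rule position_nth)
  moreover have "P ! n \<noteq> w" using assms(3) pn by auto
  ultimately show False using boundary_vertex_position[OF fv] assms(1,2) by auto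
qed

lemma consecutive_boundary_vertices:
  assumes n: "Suc n < length P" and fv: "P ! n \<in> boundary_vertices" "P ! Suc n \<in> boundary_vertices"
  shows "(P ! n, P ! Suc n) \<in> boundary_edges \<or> (P ! n, P ! Suc n) = (vpath i, w)
    \<or> (P ! n, P ! Suc n) = (w, vpath (Suc i))"
proof -
  have pos_n: "position (P ! n) = n" "position (P ! Suc n) = Suc n"
    using position_nth n by auto
  have Ri: "vpath i \<in> V" "vpath (Suc i) \<in> V" using vpath_in_V gap(1) by auto
  consider "P ! n = w" | "P ! Suc n = w" | j l where "j \<le> Suc r" "P ! n = vpath j"
    "l \<le> Suc r" "P ! Suc n = vpath l"
    using fv unfolding boundary_vertices_def by auto
  then show ?thesis
  proof cases
    case 1
    then have "position (vpath (Suc i)) = Suc n"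
      using boundary_vertex_position[OF fv(2)] gap(2,3) pos_n by (auto simp: 1)
    then have "P ! Suc n = vpath (Suc i)" using nth_position[OF Ri(2)] by simp
    then show ?thesis using 1 by simp
  next
    case 2
    then have "position (vpath i) = n"
      using boundary_vertex_position[OF fv(1)] gap(2,3) pos_n by (auto simp: 2)
    then have "P ! n = vpath i" using nth_position[OF Ri(1)] by simp
    then show ?thesis using 2 by simp
  next
    case (3 j l)
    have "j < l"
      using vpath_position_le[of l j] pos_n 3 by (cases "j < l") auto
    moreover have "\<not> Suc j < l"
      using vpath_position_less[of j "Suc j"] vpath_position_less[of "Suc j" l] pos_n 3 by auto
    ultimately have "l = Suc j" "j \<le> r" using 3 by auto
    then show ?thesis using 3 unfolding boundary_edges_def by auto
  qed
qed

lemma gap_segment_augmenting: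
  assumes pq: "position (vpath i) \<le> p" "p < q" "q \<le> position (vpath (Suc i))"
    and ends: "{P ! p, P ! q} = {w, vpath j}" "1 \<le> j" "j \<le> r"
    and not_boundary_edge: "(P ! p, P ! q) \<notin> boundary_edges"
  shows "(P ! p, P ! q) \<in> augmenting_edges_in E P crv F"
proof -
  have q: "q < length P"
    using pq(3) position_less_length[OF vpath_in_V[of "Suc i"]] gap(1) by simp
  have w_end: "position w = p \<or> position w = q"
    using ends(1) position_nth q pq(2) by (auto simp: doubleton_eq_iff)
  have inner: "\<forall>n. p < n \<and> n < q \<longrightarrow> P ! n \<notin> boundary_vertices"
    using no_boundary_vertex_in_gap pq w_end by auto
  note segment = ham_segment_across_face[OF pq(2) q inner not_boundary_edge ends]
  have "(P ! p, P ! q) \<in> path_edges P"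
    unfolding path_edges_iff using segment(1) q by auto
  then show ?thesis using augmenting_if_inside segment(2) by blast
qed

lemma augmenting_edge_to_w:
  assumes "1 \<le> i"
  shows "(vpath i, w) \<in> augmenting_edges_in E P crv F"
proof -
  have V: "vpath i \<in> V" using vpath_in_V gap(1) by simp
  have "vpath i \<noteq> vs"
    using vpath_position_less[of 0 i] assms gap(1) unfolding vpath_simps by auto
  then have "(vpath i, w) \<notin> boundary_edges"
    using vpath_ne_w[of i] vpath_ne_w gap(1) unfolding boundary_edges_def by auto
  then show ?thesis
    using gap_segment_augmenting[of "position (vpath i)" "position w" i] gap assms
    unfolding nth_position[OF V] nth_position[OF verts(2)] by (auto simp: insert_commute)
qed

lemma augmenting_edge_from_w:
  assumes "i < r"
  shows "(w, vpath (Suc i)) \<in> augmenting_edges_in E P crv F"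
proof -
  have V: "vpath (Suc i) \<in> V" using vpath_in_V gap(1) by simp
  have "vpath (Suc i) \<noteq> vt"
    using vpath_position_less[of "Suc i" "Suc r"] assms unfolding vpath_simps by auto
  moreover have "(w, vpath (Suc i)) \<notin> (\<lambda>j. (vpath j, vpath (Suc j))) ` {..r}"
  proof
    assume "(w, vpath (Suc i)) \<in> (\<lambda>j. (vpath j, vpath (Suc j))) ` {..r}"
    then obtain k where "k \<le> r" "w = vpath k" by auto
    then show False using vpath_ne_w[of k] by simp
  qed
  ultimately have "(w, vpath (Suc i)) \<notin> boundary_edges"
    using dist(2) unfolding boundary_edges_def by auto
  then show ?thesis
    using gap_segment_augmenting[of "position w" "position (vpath (Suc i))" "Suc i"] gap assms
    unfolding nth_position[OF V] nth_position[OF verts(2)] by auto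
qed

lemma augmenting_edges_eq:
  "augmenting_edges_in E P crv F =
     (if 1 \<le> i then {(vpath i, w)} else {}) \<union> (if i < r then {(w, vpath (Suc i))} else {})"
proof (intro equalityI subsetI)
  fix e assume e: "e \<in> augmenting_edges_in E P crv F"
  then obtain n where n: "Suc n < length P" "e = (P ! n, P ! Suc n)" and "e \<notin> E"
    unfolding augmenting_edges_in_def path_edges_iff by auto
  then have "e \<notin> boundary_edges" "e \<noteq> (vpath 0, w)" "e \<noteq> (w, vpath (Suc r))"
    using boundary_edges_in_E edges(1,2) unfolding vpath_simps by auto
  then show "e \<in> (if 1 \<le> i then {(vpath i, w)} else {}) \<union> (if i < r then {(w, vpath (Suc i))} else {})"
    using consecutive_boundary_vertices[OF n(1)] augmenting_edge_ends[OF e] n(2) gap(1)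
    by (cases "i = 0"; cases "i = r") auto
qed (auto split: if_splits intro: augmenting_edge_to_w augmenting_edge_from_w)

end

end

theorem mainTheorem3:
  fixes V :: "'v set" and E Eb :: "('v \<times> 'v) set"
    and pos :: "'v \<Rightarrow> complex" and crv :: "'v \<times> 'v \<Rightarrow> real \<Rightarrow> complex"
    and P :: "'v list" and s t vs w vt :: 'v and v :: "nat \<Rightarrow> 'v" and r :: nat
    and F :: "complex set"
  assumes G_dag: "is_dag V E"
    and spanning: "E \<subseteq> Eb"
    and Gbar: "st_planar_drawing V Eb s t pos crv"
    and ham: "is_ham_path V Eb P s t"
    and face: "internal_face V E pos crv F"
    and r_pos: "r \<ge> 1"
    and verts: "vs \<in> V" "w \<in> V" "vt \<in> V" "v ` {1..r} \<subseteq> V"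
    and dist: "inj_on v {1..r}" "vs \<notin> v ` {1..r}" "w \<notin> v ` {1..r}" "vt \<notin> v ` {1..r}"
      "vs \<noteq> w" "vs \<noteq> vt" "w \<noteq> vt"
    and edges: "(vs, w) \<in> E" "(w, vt) \<in> E" "(vs, v 1) \<in> E" "(v r, vt) \<in> E"
      "\<forall>i. 1 \<le> i \<and> i < r \<longrightarrow> (v i, v (Suc i)) \<in> E"
    and boundary: "frontier F =
      (\<Union>e \<in> {(vs, w), (w, vt), (vs, v 1), (v r, vt)} \<union> {(v i, v (Suc i)) | i. 1 \<le> i \<and> i < r}.
         path_image (crv e))"
  shows "augmenting_edges_in E P crv F = {(w, v 1)} \<or>
         augmenting_edges_in E P crv F = {(v r, w)} \<or>
         (\<exists>i. 1 \<le> i \<and> i < r \<and> augmenting_edges_in E P crv F = {(v i, w), (w, v (Suc i))})"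
proof -
  interpret nontransitive_face V E Eb pos crv P s t vs w vt v r F
    using spanning Gbar ham face r_pos verts dist(3,5,7) edges boundary by unfold_locales
  obtain i where gap: "i \<le> r" "position (vpath i) < position w" "position w < position (vpath (Suc i))"
    using w_position_gap by blast
  have aug: "augmenting_edges_in E P crv F =
      (if 1 \<le> i then {(vpath i, w)} else {}) \<union> (if i < r then {(w, vpath (Suc i))} else {})"
    using augmenting_edges_eq[OF gap] .
  consider "i = 0" | "i = r" | "1 \<le> i" "i < r" using gap(1) r_pos by linarith
  then show ?thesis
  proof cases
    case 1
    then show ?thesis using aug r_pos vpath_simps(3)[of 1] by auto
  next
    case 2
    then show ?thesis using aug r_pos vpath_simps(3)[of r] by auto
  next
    case 3
    then show ?thesis using aug vpath_simps(3)[of i] vpath_simps(3)[of "Suc i"] by auto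
  qed
qed

end
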